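(* Let $w=w_1\cdots w_n$ be a word of distinct positive integers avoiding the patterns $3124$ and $3214$. Let $x$ be the position of the maximum letter of $w$, and let $i_1<i_2<\dots<i_k$ ($k\ge0$) be all indices $i<x$ with $w_i>w_{i+1}$ (so that $w_1\cdots w_x$ is the concatenation of the ascending runs $w_1\cdots w_{i_1}$, $w_{i_1+1}\cdots w_{i_2}$, $\dots$, $w_{i_k+1}\cdots w_x$). Then: (1) $\mathrm{Lrmax}(w)=\{w_j: 1\le j\le x,\ j\notin\{i_1+1,i_2+1,\dots,i_k+1\}\}$; in particular $w_{i_1}<w_{i_2}<\dots<w_{i_k}<w_x$. (2) There are indices $x\le c_k\le c_{k-1}\le\dots\le c_1\le c_0=n$ such that every letter of the (possibly empty) factor $b=w_{x+1}\cdots w_{c_k}$ is larger than $w_{i_k}$ (if $k\ge 1$), and for each $1\le j\le k$ every letter of the (possibly empty) factor $b_j=w_{c_j+1}\cdots w_{c_{j-1}}$ is smaller than $w_{i_j}$ and, if $j\ge2$, larger than $w_{i_{j-1}}$. Thus $w_{x+1}\cdots w_n=b\,b_k\,b_{k-1}\cdots b_1$.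
   Context: A word $w$ of distinct positive integers contains a pattern $P=p_1\cdots p_m$ (a permutation of $[m]$) if some subsequence $w_{i_1}\cdots w_{i_m}$ with $i_1<\dots<i_m$ is order-isomorphic to $P$; otherwise it avoids $P$. $\mathrm{Lrmax}(w)$ is the set of letters $w_i$ with $w_i>w_j$ for all $j<i$. *)

theory Defs
  imports Main
begin

(* Words are lists of naturals, indexed from 0 (so w ! 0 is the letter w_1 of the paper). *)

definition order_iso :: "nat list \<Rightarrow> nat list \<Rightarrow> bool" where
  "order_iso u v \<longleftrightarrow> length u = length v \<and>
     (\<forall>i < length u. \<forall>j < length u. (u ! i < u ! j \<longleftrightarrow> v ! i < v ! j))"

definition contains_pattern :: "nat list \<Rightarrow> nat list \<Rightarrow> bool" where
  "contains_pattern w P \<longleftrightarrow>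
     (\<exists>is. length is = length P \<and> sorted_wrt (<) is \<and> (\<forall>i\<in>set is. i < length w)
           \<and> order_iso (map (\<lambda>i. w ! i) is) P)"

definition avoids :: "nat list \<Rightarrow> nat list \<Rightarrow> bool" where
  "avoids w P \<longleftrightarrow> \<not> contains_pattern w P"

definition Lrmax :: "nat list \<Rightarrow> nat set" where
  "Lrmax w = {w ! i | i. i < length w \<and> (\<forall>j < i. w ! j < w ! i)}"

end

theory Submission
  imports Defs
begin

text \<open>
  Both forbidden patterns end in a letter larger than the other three, so they can be completed
  by the maximum \<open>w\<^sub>x\<close> whenever their first three letters lie before it. Before the maximum,
  avoiding 3214 makes every descent top a left-to-right maximum and avoiding 3124 makes every
  ascent top one, while a descent bottom is by definition not. After the maximum, a letter below
  a descent top \<open>w\<^sub>i\<close> followed later by a letter above it would, together with \<open>w\<^sub>i w\<^sub>i\<^sub>+\<^sub>1\<close>, form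
  one of the two patterns; hence the letters after the maximum that exceed \<open>w\<^sub>i\<close> form a prefix
  of \<open>w\<^sub>x\<^sub>+\<^sub>1 \<cdots> w\<^sub>n\<close>, and the ends \<open>c\<^sub>j\<close> of these prefixes for the thresholds \<open>w\<^sub>i\<^sub>j\<close> cut the suffix
  into the factors \<open>b, b\<^sub>k, \<dots>, b\<^sub>1\<close>.
\<close>

lemma contains_3124I:
  assumes "a < b" "b < c" "c < d" "d < length w"
    and "w ! b < w ! c" "w ! c < w ! a" "w ! a < w ! d"
  shows "contains_pattern w [3,1,2,4]"
  unfolding contains_pattern_def
  using assms by (intro exI[of _ "[a,b,c,d]"]) (simp add: order_iso_def All_less_Suc)

lemma contains_3214I:
  assumes "a < b" "b < c" "c < d" "d < length w"
    and "w ! c < w ! b" "w ! b < w ! a" "w ! a < w ! d"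
  shows "contains_pattern w [3,2,1,4]"
  unfolding contains_pattern_def
  using assms by (intro exI[of _ "[a,b,c,d]"]) (simp add: order_iso_def All_less_Suc)

lemma length_takeWhile_mono:
  assumes "\<And>v. P v \<Longrightarrow> Q v"
  shows "length (takeWhile P xs) \<le> length (takeWhile Q xs)"
  by (metis dropWhile_dropWhile2 assms length_takeWhile_le)

lemma P_nth_less_length_takeWhile:
  "i < length (takeWhile P xs) \<Longrightarrow> P (xs ! i)"
  by (metis nth_mem set_takeWhileD takeWhile_nth)

lemma not_P_nth_ge_length_takeWhile:
  assumes prefix_closed: "\<And>i j. i < j \<Longrightarrow> j < length xs \<Longrightarrow> P (xs ! j) \<Longrightarrow> P (xs ! i)"
    and "length (takeWhile P xs) \<le> j" "j < length xs"
  shows "\<not> P (xs ! j)"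
  using assms nth_length_takeWhile[of P xs] by (metis le_eq_less_or_eq order.strict_trans1)

definition descents_before :: "nat list \<Rightarrow> nat \<Rightarrow> nat list" where
  "descents_before w x = filter (\<lambda>i. w ! Suc i < w ! i) [0..<x]"

definition cut_above :: "nat list \<Rightarrow> nat \<Rightarrow> nat \<Rightarrow> nat" where
  "cut_above w x t = Suc x + length (takeWhile (\<lambda>v. t < v) (drop (Suc x) w))"

locale avoids_3124_3214 =
  fixes w :: "nat list" and x :: nat
  assumes distinct: "distinct w"
    and avoids_3124: "avoids w [3,1,2,4]"
    and avoids_3214: "avoids w [3,2,1,4]"
    and max_pos: "x < length w"
    and max_at: "w ! x = Max (set w)"
begin

abbreviation ds :: "nat list" where
  "ds \<equiv> descents_before w x"

lemma nth_neq:
  "a < length w \<Longrightarrow> b < length w \<Longrightarrow> a \<noteq> b \<Longrightarrow> w ! a \<noteq> w ! b"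
  using distinct by (simp add: nth_eq_iff_index_eq)

lemma nth_less_max:
  assumes "a < length w" "a \<noteq> x"
  shows "w ! a < w ! x"
proof -
  have "w ! a \<le> w ! x" using assms(1) max_at by simp
  with nth_neq[OF assms(1) max_pos assms(2)] show ?thesis by simp
qed

lemma no_3124:
  "\<lbrakk>a < b; b < c; c < d; d < length w; w ! b < w ! c; w ! c < w ! a; w ! a < w ! d\<rbrakk> \<Longrightarrow> False"
  using avoids_3124 contains_3124I unfolding avoids_def by blast

lemma no_3214:
  "\<lbrakk>a < b; b < c; c < d; d < length w; w ! c < w ! b; w ! b < w ! a; w ! a < w ! d\<rbrakk> \<Longrightarrow> False"
  using avoids_3214 contains_3214I unfolding avoids_def by blast

lemma set_ds: "set ds = {i. i < x \<and> w ! Suc i < w ! i}"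
  by (auto simp: descents_before_def)

lemma descent_before_max:
  assumes "i < x" "w ! Suc i < w ! i"
  shows "Suc i < x"
proof -
  have "w ! i < w ! x" using nth_less_max assms(1) max_pos by simp
  with assms show ?thesis by (metis Suc_lessI less_asym)
qed

lemma descent_top_exceeds_prefix:
  assumes "i < x" "w ! Suc i < w ! i" "a < i"
  shows "w ! a < w ! i"
proof (rule ccontr)
  assume "\<not> w ! a < w ! i"
  with nth_neq[of a i] assms max_pos have "w ! i < w ! a" by simp
  moreover have "w ! a < w ! x" using nth_less_max assms max_pos by simp
  ultimately show False
    using no_3214[of a i "Suc i" x] descent_before_max assms max_pos by simp
qed

lemma ascent_top_exceeds_prefix:
  assumes "Suc m < x" "w ! m < w ! Suc m" "a < Suc m"
  shows "w ! a < w ! Suc m"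
proof (rule ccontr)
  assume "\<not> w ! a < w ! Suc m"
  with nth_neq[of a "Suc m"] assms max_pos have "w ! Suc m < w ! a" by simp
  moreover have "w ! a < w ! x" using nth_less_max assms max_pos by simp
  ultimately show False
    using no_3124[of a m "Suc m" x] assms max_pos by (cases "a = m") auto
qed

lemma left_to_right_max_iff:
  assumes "j < length w"
  shows "(\<forall>a < j. w ! a < w ! j) \<longleftrightarrow> j \<le> x \<and> j \<notin> Suc ` set ds"
proof
  assume lr: "\<forall>a < j. w ! a < w ! j"
  then have "j \<le> x"
    using nth_less_max[OF assms] by (metis less_asym not_le_imp_less)
  moreover have "j \<notin> Suc ` set ds"
    using lr by (auto simp: set_ds)
  ultimately show "j \<le> x \<and> j \<notin> Suc ` set ds" ..
next
  assume j: "j \<le> x \<and> j \<notin> Suc ` set ds"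
  show "\<forall>a < j. w ! a < w ! j"
  proof (intro allI impI)
    fix a assume "a < j"
    then obtain m where m: "j = Suc m" "a < Suc m" by (cases j) auto
    show "w ! a < w ! j"
    proof (cases "j = x")
      case True
      then show ?thesis using nth_less_max \<open>a < j\<close> max_pos by simp
    next
      case False
      with j m have "Suc m < x" "\<not> w ! Suc m < w ! m" by (auto simp: set_ds)
      with nth_neq[of m "Suc m"] max_pos have "w ! m < w ! Suc m" by simp
      with ascent_top_exceeds_prefix \<open>Suc m < x\<close> m show ?thesis by simp
    qed
  qed
qed

lemma Lrmax_eq: "Lrmax w = {w ! j | j. j \<le> x \<and> j \<notin> Suc ` set ds}"
proof -
  have "{j. j < length w \<and> (\<forall>a < j. w ! a < w ! j)} = {j. j \<le> x \<and> j \<notin> Suc ` set ds}"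
  proof (rule Collect_cong)
    fix j
    show "j < length w \<and> (\<forall>a < j. w ! a < w ! j) \<longleftrightarrow> j \<le> x \<and> j \<notin> Suc ` set ds"
      using left_to_right_max_iff[of j] max_pos by (cases "j < length w") auto
  qed
  then show ?thesis
    unfolding Lrmax_def setcompr_eq_image by simp
qed

lemma sorted_descent_tops: "sorted_wrt (<) (map (\<lambda>i. w ! i) ds @ [w ! x])"
proof -
  have ds_sorted: "sorted_wrt (<) ds"
    unfolding descents_before_def by (rule sorted_wrt_filter) (simp add: sorted_wrt_upt)
  have "sorted_wrt (<) (map (\<lambda>i. w ! i) ds)"
    unfolding sorted_wrt_map
    by (rule sorted_wrt_mono_rel[OF _ ds_sorted]) (auto simp: set_ds descent_top_exceeds_prefix)
  moreover have "\<forall>i \<in> set ds. w ! i < w ! x"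
    using nth_less_max max_pos by (auto simp: set_ds)
  ultimately show ?thesis by (auto simp: sorted_wrt_append)
qed

lemma large_after_max_form_prefix:
  assumes "i < x" "w ! Suc i < w ! i"
    and "x < p" "p < q" "q < length w" "w ! i < w ! q"
  shows "w ! i < w ! p"
proof (rule ccontr)
  assume "\<not> w ! i < w ! p"
  with nth_neq[of i p] assms have p_below: "w ! p < w ! i" by simp
  have "Suc i < p" using assms by simp
  show False
  proof (cases "w ! Suc i < w ! p")
    case True
    then show False using no_3124[of i "Suc i" p q] \<open>Suc i < p\<close> assms p_below by simp
  next
    case False
    with nth_neq[of "Suc i" p] \<open>Suc i < p\<close> assms have "w ! p < w ! Suc i" by simp
    then show False using no_3214[of i "Suc i" p q] \<open>Suc i < p\<close> assms by simp
  qed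
qed

lemma Suc_le_cut_above: "Suc x \<le> cut_above w x t"
  by (simp add: cut_above_def)

lemma cut_above_le_length: "cut_above w x t \<le> length w"
  using max_pos length_takeWhile_le[of "(<) t" "drop (Suc x) w"]
  unfolding cut_above_def by simp

lemma cut_above_antimono: "t \<le> t' \<Longrightarrow> cut_above w x t' \<le> cut_above w x t"
  unfolding cut_above_def by (simp add: length_takeWhile_mono)

lemma cut_above_0:
  assumes "\<forall>a \<in> set w. 0 < a"
  shows "cut_above w x 0 = length w"
proof -
  have "takeWhile ((<) 0) (drop (Suc x) w) = drop (Suc x) w"
    using assms by (auto dest: in_set_dropD)
  then show ?thesis
    unfolding cut_above_def using max_pos by (metis Suc_leI add_diff_inverse_nat length_drop not_le)
qed

lemma above_before_cut_above:
  "Suc x \<le> p \<Longrightarrow> p < cut_above w x t \<Longrightarrow> t < w ! p"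
  using P_nth_less_length_takeWhile[of "p - Suc x" "\<lambda>v. t < v" "drop (Suc x) w"] max_pos
  by (simp add: cut_above_def)

lemma not_above_after_cut_above:
  assumes "i \<in> set ds" "cut_above w x (w ! i) \<le> p" "p < length w"
  shows "\<not> w ! i < w ! p"
proof -
  let ?suffix = "drop (Suc x) w"
  have "\<not> w ! i < ?suffix ! (p - Suc x)"
  proof (rule not_P_nth_ge_length_takeWhile)
    show "w ! i < ?suffix ! a" if "a < b" "b < length ?suffix" "w ! i < ?suffix ! b" for a b
      using large_after_max_form_prefix[of i "Suc x + a" "Suc x + b"] that assms(1) max_pos
      by (simp add: set_ds)
  qed (use assms max_pos in \<open>auto simp: cut_above_def\<close>)
  moreover have "Suc x \<le> p" using Suc_le_cut_above assms(2) le_trans by blast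
  ultimately show ?thesis using max_pos by simp
qed

lemma suffix_decomposition:
  assumes positive: "\<forall>a \<in> set w. 0 < a"
  shows "\<exists>c :: nat \<Rightarrow> nat.
              c 0 = length w
            \<and> (\<forall>j < length ds. c (Suc j) \<le> c j)
            \<and> Suc x \<le> c (length ds)
            \<and> (\<forall>p. Suc x \<le> p \<and> p < c (length ds) \<and> 1 \<le> length ds
                    \<longrightarrow> w ! (ds ! (length ds - 1)) < w ! p)
            \<and> (\<forall>j. 1 \<le> j \<and> j \<le> length ds \<longrightarrow>
                 (\<forall>p. c j \<le> p \<and> p < c (j - 1) \<longrightarrow>
                    w ! p < w ! (ds ! (j - 1))
                    \<and> (2 \<le> j \<longrightarrow> w ! (ds ! (j - 2)) < w ! p)))"
proof -
  text \<open>The threshold \<open>0\<close> for \<open>j = 0\<close> lies below every letter, so it cuts at the end of \<open>w\<close>.\<close>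
  define th where "th j = (if j = 0 then 0 else w ! (ds ! (j - 1)))" for j
  define c where "c j = cut_above w x (th j)" for j
  have "sorted_wrt (<) (map (\<lambda>i. w ! i) ds)"
    using sorted_descent_tops by (simp add: sorted_wrt_append)
  then have th_mono: "th j \<le> th (Suc j)" if "j < length ds" for j
    using that sorted_wrt_nth_less[of "(<)" "map (\<lambda>i. w ! i) ds" "j - 1" j]
    by (auto simp: th_def)
  have ds_mem: "ds ! (j - 1) \<in> set ds" if "1 \<le> j" "j \<le> length ds" for j
    using that by simp
  have factor: "w ! p < w ! (ds ! (j - 1)) \<and> (2 \<le> j \<longrightarrow> w ! (ds ! (j - 2)) < w ! p)"
    if j: "1 \<le> j" "j \<le> length ds" and p: "c j \<le> p" "p < c (j - 1)" for j p
  proof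
    have "p < length w" "Suc x \<le> p"
      using p cut_above_le_length[of "th (j - 1)"] Suc_le_cut_above[of "th j"]
      by (auto simp: c_def)
    moreover have "ds ! (j - 1) < x" using set_ds ds_mem[OF j] by blast
    moreover have "\<not> w ! (ds ! (j - 1)) < w ! p"
      using not_above_after_cut_above[OF ds_mem[OF j]] p \<open>p < length w\<close> j
      by (simp add: c_def th_def)
    ultimately show "w ! p < w ! (ds ! (j - 1))"
      using nth_neq[of p "ds ! (j - 1)"] max_pos by fastforce
    show "2 \<le> j \<longrightarrow> w ! (ds ! (j - 2)) < w ! p"
    proof
      assume "2 \<le> j"
      then have "j - 1 \<noteq> 0" "j - 1 - 1 = j - 2" by arith+
      then have "th (j - 1) = w ! (ds ! (j - 2))" by (simp add: th_def)
      moreover have "th (j - 1) < w ! p"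
        using above_before_cut_above \<open>Suc x \<le> p\<close> p(2) by (simp add: c_def)
      ultimately show "w ! (ds ! (j - 2)) < w ! p" by simp
    qed
  qed
  have "c 0 = length w" using cut_above_0[OF positive] by (simp add: c_def th_def)
  moreover have "\<forall>j < length ds. c (Suc j) \<le> c j"
    unfolding c_def using cut_above_antimono[OF th_mono] by blast
  moreover have "Suc x \<le> c (length ds)"
    unfolding c_def by (rule Suc_le_cut_above)
  moreover have "\<forall>p. Suc x \<le> p \<and> p < c (length ds) \<and> 1 \<le> length ds
                    \<longrightarrow> w ! (ds ! (length ds - 1)) < w ! p"
    using above_before_cut_above by (auto simp: c_def th_def)
  ultimately show ?thesis
    using factor by (intro exI[of _ c]) blast
qed

end

theorem proposition2p2:
  fixes w :: "nat list" and x :: nat and ds :: "nat list"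
  assumes "w \<noteq> []" and "distinct w" and "\<forall>a\<in>set w. 0 < a"
    and "avoids w [3,1,2,4]" and "avoids w [3,2,1,4]"
    and "x < length w" and "w ! x = Max (set w)"
    and "ds = filter (\<lambda>i. w ! Suc i < w ! i) [0..<x]"
  shows "Lrmax w = {w ! j | j. j \<le> x \<and> j \<notin> Suc ` set ds}
         \<and> sorted_wrt (<) (map (\<lambda>i. w ! i) ds @ [w ! x])
         \<and> (\<exists>c :: nat \<Rightarrow> nat.
              c 0 = length w
            \<and> (\<forall>j < length ds. c (Suc j) \<le> c j)
            \<and> Suc x \<le> c (length ds)
            \<and> (\<forall>p. Suc x \<le> p \<and> p < c (length ds) \<and> 1 \<le> length ds
                    \<longrightarrow> w ! (ds ! (length ds - 1)) < w ! p)
            \<and> (\<forall>j. 1 \<le> j \<and> j \<le> length ds \<longrightarrow>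
                 (\<forall>p. c j \<le> p \<and> p < c (j - 1) \<longrightarrow>
                    w ! p < w ! (ds ! (j - 1))
                    \<and> (2 \<le> j \<longrightarrow> w ! (ds ! (j - 2)) < w ! p))))"
proof -
  interpret avoids_3124_3214 w x
    using assms by unfold_locales
  have "ds = descents_before w x"
    using assms(8) by (simp add: descents_before_def)
  then show ?thesis
    using Lrmax_eq sorted_descent_tops suffix_decomposition[OF assms(3)] by simp
qed

end
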